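(* Fix $K\ge 3$ and a configuration $\psi=(i,\eta_1,\eta_2)$ with $\eta_1\ne\eta_2$. Then $$D^*(i,\eta_1,\eta_2)=\max_{0\le\lambda(i)\le1}\Big[\lambda(i)D(\eta_1\|\tilde\eta)+(1-\lambda(i))\tfrac{K-2}{K-1}D(\eta_2\|\tilde\eta)\Big],$$ where $\tilde\eta=\eta(\tilde\kappa)$ and $$\tilde\kappa=\frac{\lambda(i)\kappa_1+(1-\lambda(i))\frac{K-2}{K-1}\kappa_2}{\lambda(i)+(1-\lambda(i))\frac{K-2}{K-1}}.$$ Moreover, the maximiser $\lambda^*(i,\eta_1,\eta_2)$ is of the form $\lambda^*(i,\eta_1,\eta_2)(j)=\frac{1-\lambda^*(i,\eta_1,\eta_2)(i)}{K-1}$ for all $j\ne i$.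
   Context: Exponential family: densities $f(x|\eta)=h(x)\exp(\eta^T\mathbf{T}(x)-A(\eta))$, natural parameter $\eta\in\mathbb{R}^d$ (or an open convex subset), $\mathbf{T}(x)\in\mathbb{R}^d$, log-partition function $A(\eta)=\log\int h(x)e^{\eta^T\mathbf{T}(x)}dx$ (convex). Its convex conjugate is $F(\kappa)=\sup_\eta\{\eta^T\kappa-A(\eta)\}$; $A$ and $F$ are assumed twice continuously differentiable wherever finite. The expectation parameter is $\kappa(\eta)=\nabla A(\eta)$ and the inverse map is $\eta(\kappa)=\nabla F(\kappa)$; $\kappa_1=\kappa(\eta_1)$, $\kappa_2=\kappa(\eta_2)$. Relative entropy: $D(\eta_1\|\eta_2)=(\eta_1-\eta_2)^T\kappa_1-A(\eta_1)+A(\eta_2)$. With $\mathcal{P}(K)$ the set of probability vectors on $\{1,\dots,K\}$, $D^*(i,\eta_1,\eta_2)=\max_{\lambda\in\mathcal{P}(K)}\min_{\eta_1',\eta_2',\,j\ne i}\big[\lambda(i)D(\eta_1\|\eta_2')+\lambda(j)D(\eta_2\|\eta_1')+(1-\lambda(i)-\lambda(j))D(\eta_2\|\eta_2')\big]$, and $\lambda^*(i,\eta_1,\eta_2)\in\mathcal{P}(K)$ denotes the $\lambda$ achieving this maximum. *)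

theory Defs
  imports "HOL-Analysis.Analysis"
begin

text \<open>Relative entropy between members of the exponential family with
  log-partition function A and expectation map kappa = gradient of A:
  D(eta1 || eta2) = (eta1 - eta2)^T kappa(eta1) - A(eta1) + A(eta2).\<close>
definition relent ::
  "(real^'d \<Rightarrow> real) \<Rightarrow> (real^'d \<Rightarrow> real^'d) \<Rightarrow> real^'d \<Rightarrow> real^'d \<Rightarrow> real" where
  "relent A kappa e1 e2 = (e1 - e2) \<bullet> kappa e1 - A e1 + A e2"

definition conj :: "(real^'d) set \<Rightarrow> (real^'d \<Rightarrow> real) \<Rightarrow> real^'d \<Rightarrow> real" where
  "conj N A k = Sup ((\<lambda>e. e \<bullet> k - A e) ` N)"

definition probvec :: "nat \<Rightarrow> (nat \<Rightarrow> real) set" where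
  "probvec K = {l. (\<forall>j\<in>{1..K}. 0 \<le> l j) \<and> (\<forall>j. j \<notin> {1..K} \<longrightarrow> l j = 0)
                   \<and> (\<Sum>j=1..K. l j) = 1}"

definition Dinner ::
  "(real^'d) set \<Rightarrow> (real^'d \<Rightarrow> real) \<Rightarrow> (real^'d \<Rightarrow> real^'d) \<Rightarrow> nat \<Rightarrow> nat
     \<Rightarrow> real^'d \<Rightarrow> real^'d \<Rightarrow> (nat \<Rightarrow> real) \<Rightarrow> real" where
  "Dinner N A kappa K i e1 e2 l =
     Inf {l i * relent A kappa e1 e2' + l j * relent A kappa e2 e1'
          + (1 - l i - l j) * relent A kappa e2 e2'
         | e1' e2' j. e1' \<in> N \<and> e2' \<in> N \<and> j \<in> {1..K} \<and> j \<noteq> i}"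

definition Dstar ::
  "(real^'d) set \<Rightarrow> (real^'d \<Rightarrow> real) \<Rightarrow> (real^'d \<Rightarrow> real^'d) \<Rightarrow> nat \<Rightarrow> nat
     \<Rightarrow> real^'d \<Rightarrow> real^'d \<Rightarrow> real" where
  "Dstar N A kappa K i e1 e2 = Sup (Dinner N A kappa K i e1 e2 ` probvec K)"

end

theory Submission
  imports Defs
begin

(* For fixed weights lambda the inner minimum is attained with eta1' = eta2, and the minimum
   over eta2' of lambda(i) D(eta1||.) + w D(eta2||.) is attained at the point whose expectation
   parameter is the weighted mean of kappa1 and kappa2, by the compensation identity
     a D(x1||z) + b D(x2||z) = a D(x1||y) + b D(x2||y) + (a+b) D(y||z)
   for (a+b) kappa(y) = a kappa(x1) + b kappa(x2).  The adversary's best j carries weight at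
   least the average (1 - lambda(i))/(K-1) of the indices j /= i, so spreading that mass
   uniformly can only raise the inner minimum, and strictly so unless it was uniform already
   (if lambda(i) = 0 the value is 0 anyway).  Hence D* is the maximum of a continuous profile
   in lambda(i) over [0,1]. *)

lemma convex_on_above_tangent:
  fixes f :: "'a::real_normed_vector \<Rightarrow> real"
  assumes convex: "convex_on S f" and x: "x \<in> S" and y: "y \<in> S"
    and deriv: "(f has_derivative f') (at x)"
  shows "f x + f' (y - x) \<le> f y"
proof -
  define \<phi> where "\<phi> s = f (x + s *\<^sub>R (y - x))" for s :: real
  have line: "((\<lambda>s::real. x + s *\<^sub>R (y - x)) has_derivative (\<lambda>s. s *\<^sub>R (y - x))) (at 0)"
    by (auto intro!: derivative_eq_intros)
  have "(\<phi> has_derivative (\<lambda>s. f' (s *\<^sub>R (y - x)))) (at 0)"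
    unfolding \<phi>_def using diff_chain_at[OF line] deriv by (simp add: o_def)
  moreover have "(\<lambda>s. f' (s *\<^sub>R (y - x))) = (*) (f' (y - x))"
    using linear_cmul[OF has_derivative_linear[OF deriv]] by (auto simp: fun_eq_iff)
  ultimately have "(\<phi> has_real_derivative f' (y - x)) (at 0)"
    by (simp add: has_field_derivative_def)
  then have slope: "((\<lambda>s. (\<phi> s - \<phi> 0) / (s - 0)) \<longlongrightarrow> f' (y - x)) (at_right 0)"
    unfolding has_field_derivative_iff by (rule tendsto_mono[OF at_le[OF subset_UNIV]])
  have "eventually (\<lambda>s. s \<in> {0<..<1::real}) (at_right 0)"
    by (rule eventually_at_right_real) simp
  then have "eventually (\<lambda>s. (\<phi> s - \<phi> 0) / (s - 0) \<le> f y - f x) (at_right 0)"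
  proof eventually_elim
    case (elim s)
    have "\<phi> s = f ((1 - s) *\<^sub>R x + s *\<^sub>R y)" by (simp add: \<phi>_def algebra_simps)
    also have "\<dots> \<le> (1 - s) * f x + s * f y" using convex_onD[OF convex] elim x y by auto
    finally have "\<phi> s - \<phi> 0 \<le> s * (f y - f x)" by (simp add: \<phi>_def algebra_simps)
    then show ?case using elim by (simp add: divide_le_eq mult.commute)
  qed
  then have "f' (y - x) \<le> f y - f x" by (rule tendsto_upperbound[OF slope]) simp
  then show ?thesis by simp
qed

lemma gradient_eq_0_at_minimum:
  fixes f :: "'a::real_inner \<Rightarrow> real"
  assumes "(f has_derivative (\<lambda>h. u \<bullet> h)) (at x)" and "x \<in> S" and "open S"
    and "\<forall>y\<in>S. f x \<le> f y"
  shows "u = 0"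
proof -
  have "(\<lambda>h. u \<bullet> h) = (\<lambda>h. 0)" using differential_zero_maxmin assms by blast
  then have "u \<bullet> u = 0" by metis
  then show ?thesis by simp
qed

lemma relent_weighted_split:
  assumes "a *\<^sub>R kappa x1 + b *\<^sub>R kappa x2 = (a + b) *\<^sub>R kappa y"
  shows "a * relent A kappa x1 z + b * relent A kappa x2 z
       = a * relent A kappa x1 y + b * relent A kappa x2 y + (a + b) * relent A kappa y z"
proof -
  have "(y - z) \<bullet> (a *\<^sub>R kappa x1 + b *\<^sub>R kappa x2) = (y - z) \<bullet> ((a + b) *\<^sub>R kappa y)"
    using assms by simp
  then have "a * ((y - z) \<bullet> kappa x1) + b * ((y - z) \<bullet> kappa x2) = (a + b) * ((y - z) \<bullet> kappa y)"
    by (simp add: inner_add_right)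
  then show ?thesis unfolding relent_def by (simp add: inner_diff_left algebra_simps)
qed

lemma exists_ge_average:
  fixes f :: "'a \<Rightarrow> real"
  assumes "finite S" and "S \<noteq> {}"
  shows "\<exists>j\<in>S. sum f S / card S \<le> f j"
proof (rule ccontr)
  assume "\<not> ?thesis"
  then have "sum f S < (\<Sum>j\<in>S. sum f S / card S)"
    using assms by (intro sum_strict_mono) auto
  then show False using assms by simp
qed

lemma exists_gt_average:
  fixes f :: "'a \<Rightarrow> real"
  assumes "finite S" and "j0 \<in> S" and "f j0 \<noteq> sum f S / card S"
  shows "\<exists>j\<in>S. sum f S / card S < f j"
proof (rule ccontr)
  assume "\<not> ?thesis"
  then have "\<forall>j\<in>S. f j \<le> sum f S / card S" by (simp add: not_less)
  with assms have "sum f S < (\<Sum>j\<in>S. sum f S / card S)"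
    by (intro sum_strict_mono_ex1) (auto simp: order.strict_iff_order)
  then show False using assms by (auto split: if_splits)
qed

lemma probvec_nonneg: "l \<in> probvec K \<Longrightarrow> 0 \<le> l j"
  unfolding probvec_def by (cases "j \<in> {1..K}") auto

lemma probvec_sum_remove:
  assumes "l \<in> probvec K" and "i \<in> {1..K}"
  shows "(\<Sum>j\<in>{1..K}-{i}. l j) = 1 - l i"
  using assms sum.remove[of "{1..K}" i l] unfolding probvec_def by simp

lemma probvec_add_le_1:
  assumes l: "l \<in> probvec K" and "i \<in> {1..K}" and "j \<in> {1..K}" and "j \<noteq> i"
  shows "l i + l j \<le> 1"
proof -
  have "l j \<le> (\<Sum>j\<in>{1..K}-{i}. l j)"
    using assms by (intro member_le_sum probvec_nonneg[OF l]) auto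
  then show ?thesis using probvec_sum_remove[OF l \<open>i \<in> {1..K}\<close>] by simp
qed

lemma probvec_le_1:
  assumes l: "l \<in> probvec K"
  shows "l j \<le> 1"
proof (cases "j \<in> {1..K}")
  case True
  then have "l j \<le> (\<Sum>j=1..K. l j)" by (intro member_le_sum probvec_nonneg[OF l]) auto
  then show ?thesis using l unfolding probvec_def by simp
qed (use l in \<open>auto simp: probvec_def\<close>)

definition uniform_off :: "nat \<Rightarrow> nat \<Rightarrow> real \<Rightarrow> nat \<Rightarrow> real" where
  "uniform_off K i t j = (if j = i then t else if j \<in> {1..K} then (1 - t) / (real K - 1) else 0)"

lemma uniform_off_probvec:
  assumes "2 \<le> K" and i: "i \<in> {1..K}" and t: "t \<in> {0..1}"
  shows "uniform_off K i t \<in> probvec K"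
proof -
  have "real (card ({1..K}-{i})) = real K - 1" using i by (simp add: of_nat_diff)
  then have "(\<Sum>j\<in>{1..K}-{i}. uniform_off K i t j) = 1 - t"
    using \<open>2 \<le> K\<close> by (simp add: uniform_off_def)
  then have "(\<Sum>j=1..K. uniform_off K i t j) = 1"
    using sum.remove[of "{1..K}" i "uniform_off K i t"] i by (simp add: uniform_off_def)
  then show ?thesis using t i \<open>2 \<le> K\<close> unfolding probvec_def by (auto simp: uniform_off_def)
qed

locale exp_family =
  fixes N :: "(real^'d) set" and A :: "real^'d \<Rightarrow> real"
    and kappa etamap :: "real^'d \<Rightarrow> real^'d"
  assumes open_N: "open N"
    and convex_A: "convex_on N A"
    and grad_A: "\<And>e. e \<in> N \<Longrightarrow> (A has_derivative (\<lambda>h. kappa e \<bullet> h)) (at e)"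
    and open_M: "open (kappa ` N)"
    and convex_M: "convex (kappa ` N)"
    and conj_bdd: "\<And>k. k \<in> kappa ` N \<Longrightarrow> bdd_above ((\<lambda>e. e \<bullet> k - A e) ` N)"
    and grad_conj: "\<And>k. k \<in> kappa ` N \<Longrightarrow> (conj N A has_derivative (\<lambda>h. etamap k \<bullet> h)) (at k)"
    and continuous_etamap: "continuous_on (kappa ` N) etamap"
begin

abbreviation D :: "real^'d \<Rightarrow> real^'d \<Rightarrow> real" where
  "D \<equiv> relent A kappa"

lemma above_tangent: "e \<in> N \<Longrightarrow> x \<in> N \<Longrightarrow> A e + kappa e \<bullet> (x - e) \<le> A x"
  using convex_on_above_tangent[OF convex_A _ _ grad_A] by blast

lemma relent_nonneg:
  assumes "e \<in> N" and "x \<in> N"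
  shows "0 \<le> D e x"
  using above_tangent[OF assms] unfolding relent_def
  by (simp add: inner_diff_left inner_diff_right inner_commute)

text \<open>kappa e is a maximiser of the concave function k' \<mapsto> e \<bullet> k' - conj N A k', whose
  gradient at kappa e is e - etamap (kappa e).\<close>
lemma etamap_kappa:
  assumes e: "e \<in> N"
  shows "etamap (kappa e) = e"
proof -
  have conj_kappa: "conj N A (kappa e) = e \<bullet> kappa e - A e"
    unfolding conj_def
  proof (rule cSup_eq_maximum)
    fix z assume "z \<in> (\<lambda>e'. e' \<bullet> kappa e - A e') ` N"
    then obtain e' where "e' \<in> N" and "z = e' \<bullet> kappa e - A e'" by auto
    then show "z \<le> e \<bullet> kappa e - A e"
      using above_tangent[OF e \<open>e' \<in> N\<close>] by (simp add: inner_diff_right inner_commute)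
  qed (use e in auto)
  have "conj N A (kappa e) - e \<bullet> kappa e \<le> conj N A k - e \<bullet> k" if "k \<in> kappa ` N" for k
  proof -
    have "e \<bullet> k - A e \<le> conj N A k"
      unfolding conj_def by (rule cSup_upper) (use e conj_bdd[OF that] in auto)
    then show ?thesis using conj_kappa by simp
  qed
  moreover have "((\<lambda>k. conj N A k - e \<bullet> k) has_derivative (\<lambda>h. (etamap (kappa e) - e) \<bullet> h)) (at (kappa e))"
    using e by (auto intro!: derivative_eq_intros grad_conj simp: inner_diff_left)
  ultimately have "etamap (kappa e) - e = 0"
    using e open_M by (intro gradient_eq_0_at_minimum) auto
  then show ?thesis by simp
qed

lemma relent_eq_0_iff:
  assumes e: "e \<in> N" and x: "x \<in> N"
  shows "D e x = 0 \<longleftrightarrow> x = e"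
proof
  assume D0: "D e x = 0"
  have "A x - kappa e \<bullet> x \<le> A y - kappa e \<bullet> y" if "y \<in> N" for y
    using above_tangent[OF e that] D0 unfolding relent_def
    by (simp add: inner_diff_left inner_diff_right inner_commute)
  moreover have "((\<lambda>y. A y - kappa e \<bullet> y) has_derivative (\<lambda>h. (kappa x - kappa e) \<bullet> h)) (at x)"
    using x by (auto intro!: derivative_eq_intros grad_A simp: inner_diff_left)
  ultimately have "kappa x - kappa e = 0"
    using x open_N by (intro gradient_eq_0_at_minimum) auto
  then show "x = e" using etamap_kappa[OF x] etamap_kappa[OF e] by (metis eq_iff_diff_eq_0)
qed (simp add: relent_def)

definition centroid :: "real \<Rightarrow> real^'d \<Rightarrow> real \<Rightarrow> real^'d \<Rightarrow> real^'d" where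
  "centroid a x b y = etamap ((1 / (a + b)) *\<^sub>R (a *\<^sub>R kappa x + b *\<^sub>R kappa y))"

lemma centroid_in_N_kappa:
  assumes x: "x \<in> N" and y: "y \<in> N" and "0 \<le> a" "0 \<le> b" "0 < a + b"
  shows "centroid a x b y \<in> N"
    and "(a + b) *\<^sub>R kappa (centroid a x b y) = a *\<^sub>R kappa x + b *\<^sub>R kappa y"
proof -
  have "(a / (a + b)) *\<^sub>R kappa x + (b / (a + b)) *\<^sub>R kappa y \<in> kappa ` N"
    using assms by (intro convexD[OF convex_M]) (auto simp: add_divide_distrib[symmetric])
  then obtain z where z: "z \<in> N"
    and kz: "kappa z = (1 / (a + b)) *\<^sub>R (a *\<^sub>R kappa x + b *\<^sub>R kappa y)"
    by (auto simp: scaleR_add_right)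
  have "centroid a x b y = z" using etamap_kappa[OF z] kz by (simp add: centroid_def)
  then show "centroid a x b y \<in> N"
    and "(a + b) *\<^sub>R kappa (centroid a x b y) = a *\<^sub>R kappa x + b *\<^sub>R kappa y"
    using z kz \<open>0 < a + b\<close> by auto
qed

definition centroid_div :: "real \<Rightarrow> real^'d \<Rightarrow> real \<Rightarrow> real^'d \<Rightarrow> real" where
  "centroid_div a x b y = a * D x (centroid a x b y) + b * D y (centroid a x b y)"

lemma centroid_div_le:
  assumes x: "x \<in> N" and y: "y \<in> N" and z: "z \<in> N" and a: "0 \<le> a" and b: "0 \<le> b"
  shows "centroid_div a x b y \<le> a * D x z + b * D y z"
proof (cases "a + b = 0")
  case True
  then have "a = 0" and "b = 0" using a b by linarith+
  then show ?thesis by (simp add: centroid_div_def)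
next
  case False
  then have ab: "0 < a + b" using a b by simp
  note c = centroid_in_N_kappa[OF x y a b ab]
  have "a * D x z + b * D y z = centroid_div a x b y + (a + b) * D (centroid a x b y) z"
    unfolding centroid_div_def
    by (rule relent_weighted_split[where A = A and kappa = kappa, OF c(2)[symmetric]])
  moreover have "0 \<le> (a + b) * D (centroid a x b y) z"
    using ab relent_nonneg[OF c(1) z] by simp
  ultimately show ?thesis by simp
qed

lemma centroid_div_left_0:
  assumes "y \<in> N" and "0 < b"
  shows "centroid_div 0 x b y = 0"
  using assms etamap_kappa[of y] by (simp add: centroid_div_def centroid_def relent_def)

lemma relent_centroid_pos:
  assumes x: "x \<in> N" and y: "y \<in> N" and "x \<noteq> y" and "0 < a" and "0 \<le> b"
  shows "0 < D y (centroid a x b y)"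
proof -
  note c = centroid_in_N_kappa[OF x y]
  have "centroid a x b y \<noteq> y"
  proof
    assume "centroid a x b y = y"
    then have "a *\<^sub>R kappa x = a *\<^sub>R kappa y"
      using c(2)[of a b] assms by (simp add: scaleR_left_distrib)
    then show False using assms etamap_kappa[OF x] etamap_kappa[OF y] by auto
  qed
  then show ?thesis using assms c(1)[of a b] relent_nonneg relent_eq_0_iff
    by (metis add_pos_nonneg order_less_le)
qed

lemma centroid_div_pos:
  assumes x: "x \<in> N" and y: "y \<in> N" and "x \<noteq> y" and "0 < a" and "0 < b"
  shows "0 < centroid_div a x b y"
proof -
  have "0 < b * D y (centroid a x b y)"
    using assms relent_centroid_pos by simp
  moreover have "0 \<le> a * D x (centroid a x b y)"
    using assms centroid_in_N_kappa(1)[OF x y] relent_nonneg by simp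
  ultimately show ?thesis unfolding centroid_div_def by simp
qed

lemma continuous_on_centroid_div:
  assumes x: "x \<in> N" and y: "y \<in> N"
    and "continuous_on S a" "continuous_on S b"
    and pos: "\<And>t. t \<in> S \<Longrightarrow> 0 \<le> a t \<and> 0 \<le> b t \<and> 0 < a t + b t"
  shows "continuous_on S (\<lambda>t. centroid_div (a t) x (b t) y)"
proof -
  define k where "k t = (1 / (a t + b t)) *\<^sub>R (a t *\<^sub>R kappa x + b t *\<^sub>R kappa y)" for t
  have "continuous_on S k"
    unfolding k_def using assms by (intro continuous_intros) force+
  moreover have "k t \<in> kappa ` N" if "t \<in> S" for t
  proof -
    have ab: "0 \<le> a t" "0 \<le> b t" "0 < a t + b t" using pos[OF that] by auto
    note c = centroid_in_N_kappa[OF x y ab]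
    have "k t = kappa (centroid (a t) x (b t) y)"
      using ab by (simp add: k_def c(2)[symmetric])
    then show ?thesis using c(1) by simp
  qed
  ultimately have "continuous_on S (\<lambda>t. etamap (k t))"
    by (intro continuous_on_compose2[OF continuous_etamap]) auto
  then have ce: "continuous_on S (\<lambda>t. centroid (a t) x (b t) y)"
    by (simp add: centroid_def k_def)
  have "continuous_on N A"
    by (intro continuous_at_imp_continuous_on) (auto intro: has_derivative_continuous grad_A)
  then have "continuous_on S (\<lambda>t. A (centroid (a t) x (b t) y))"
    by (rule continuous_on_compose2[OF _ ce]) (use centroid_in_N_kappa(1)[OF x y] pos in auto)
  then show ?thesis
    unfolding centroid_div_def relent_def using ce assms by (intro continuous_intros) auto
qed

lemma Dinner_le:
  assumes l: "l \<in> probvec K" and i: "i \<in> {1..K}" and j: "j \<in> {1..K}" "j \<noteq> i"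
    and e1: "e1 \<in> N" and e2: "e2 \<in> N" and x: "x \<in> N" and y: "y \<in> N"
  shows "Dinner N A kappa K i e1 e2 l \<le> l i * D e1 y + l j * D e2 x + (1 - l i - l j) * D e2 y"
  unfolding Dinner_def
proof (rule cInf_lower)
  show "bdd_below {l i * D e1 e2' + l j' * D e2 e1' + (1 - l i - l j') * D e2 e2'
         | e1' e2' j'. e1' \<in> N \<and> e2' \<in> N \<and> j' \<in> {1..K} \<and> j' \<noteq> i}"
  proof (rule bdd_belowI[of _ 0], clarify)
    fix x' y' j' assume x'y': "x' \<in> N" "y' \<in> N" and j': "j' \<in> {1..K}" "j' \<noteq> i"
    have "0 \<le> 1 - l i - l j'" using probvec_add_le_1[OF l i j'] by simp
    then show "0 \<le> l i * D e1 y' + l j' * D e2 x' + (1 - l i - l j') * D e2 y'"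
      using probvec_nonneg[OF l] relent_nonneg[OF e1] relent_nonneg[OF e2] x'y'
      by (intro add_nonneg_nonneg mult_nonneg_nonneg) auto
  qed
qed (use j x y in blast)

lemma Dinner_ge:
  assumes "j \<in> {1..K}" "j \<noteq> i" and "x \<in> N"
    and "\<And>j x y. j \<in> {1..K} \<Longrightarrow> j \<noteq> i \<Longrightarrow> x \<in> N \<Longrightarrow> y \<in> N \<Longrightarrow>
       b \<le> l i * D e1 y + l j * D e2 x + (1 - l i - l j) * D e2 y"
  shows "b \<le> Dinner N A kappa K i e1 e2 l"
  unfolding Dinner_def by (rule cInf_greatest) (use assms in blast)+

end

locale dstar_config = exp_family N A kappa etamap
  for N :: "(real^'d) set" and A :: "real^'d \<Rightarrow> real" and kappa etamap :: "real^'d \<Rightarrow> real^'d" +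
  fixes K i :: nat and e1 e2 :: "real^'d"
  assumes K3: "3 \<le> K" and i: "i \<in> {1..K}"
    and e1: "e1 \<in> N" and e2: "e2 \<in> N" and neq: "e1 \<noteq> e2"
begin

definition off_weight :: real where
  "off_weight = (real K - 2) / (real K - 1)"

definition eta_tilde :: "real \<Rightarrow> real^'d" where
  "eta_tilde t = centroid t e1 ((1 - t) * off_weight) e2"

definition profile :: "real \<Rightarrow> real" where
  "profile t = centroid_div t e1 ((1 - t) * off_weight) e2"

lemma off_weight_pos: "0 < off_weight"
  using K3 by (simp add: off_weight_def)

lemma off_weight_eq: "(1 - t) * off_weight = 1 - t - (1 - t) / (real K - 1)"
  using K3 by (simp add: off_weight_def field_simps)

lemma profile_weights:
  assumes "t \<in> {0..1}"
  shows "0 \<le> t" and "0 \<le> (1 - t) * off_weight" and "0 < t + (1 - t) * off_weight"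
proof -
  show "0 \<le> t" and w: "0 \<le> (1 - t) * off_weight" using assms off_weight_pos by auto
  show "0 < t + (1 - t) * off_weight"
    using assms off_weight_pos w by (cases "t = 0") (simp_all add: add_pos_nonneg)
qed

lemma eta_tilde_in_N: "t \<in> {0..1} \<Longrightarrow> eta_tilde t \<in> N"
  unfolding eta_tilde_def using centroid_in_N_kappa(1)[OF e1 e2 profile_weights] by blast

lemma uniform_off_in_probvec: "t \<in> {0..1} \<Longrightarrow> uniform_off K i t \<in> probvec K"
  using uniform_off_probvec[OF _ i] K3 by simp

lemma others_nonempty: "{1..K} - {i} \<noteq> {}"
proof -
  have "(if i = 1 then 2 else 1) \<in> {1..K} - {i}" using K3 by auto
  then show ?thesis by blast
qed

lemma average_others:
  assumes "l \<in> probvec K"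
  shows "(\<Sum>j\<in>{1..K}-{i}. l j) / card ({1..K}-{i}) = (1 - l i) / (real K - 1)"
  using probvec_sum_remove[OF assms i] i K3 by (simp add: of_nat_diff)

text \<open>Choosing the remaining points e1' = e2 and e2' = eta_tilde (l i) in the inner
  minimisation; the deficit term vanishes exactly when l j is the average weight.\<close>
lemma Dinner_le_profile_minus:
  assumes l: "l \<in> probvec K" and j: "j \<in> {1..K}" "j \<noteq> i"
  shows "Dinner N A kappa K i e1 e2 l
     \<le> profile (l i) - (l j - (1 - l i) / (real K - 1)) * D e2 (eta_tilde (l i))"
proof -
  have li: "l i \<in> {0..1}" using probvec_nonneg[OF l] probvec_le_1[OF l] by auto
  have "Dinner N A kappa K i e1 e2 l
      \<le> l i * D e1 (eta_tilde (l i)) + l j * D e2 e2 + (1 - l i - l j) * D e2 (eta_tilde (l i))"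
    by (rule Dinner_le[OF l i j e1 e2 e2 eta_tilde_in_N[OF li]])
  also have "\<dots> = profile (l i) - (l j - (1 - l i) / (real K - 1)) * D e2 (eta_tilde (l i))"
  proof -
    have p: "profile (l i)
        = l i * D e1 (eta_tilde (l i)) + (1 - l i) * off_weight * D e2 (eta_tilde (l i))"
      by (simp add: profile_def centroid_div_def eta_tilde_def)
    have "D e2 e2 = 0" by (simp add: relent_def)
    then show ?thesis unfolding p off_weight_eq by (simp add: algebra_simps)
  qed
  finally show ?thesis .
qed

lemma Dinner_le_profile:
  assumes l: "l \<in> probvec K"
  shows "Dinner N A kappa K i e1 e2 l \<le> profile (l i)"
proof -
  obtain j where "j \<in> {1..K} - {i}" and "(\<Sum>j\<in>{1..K}-{i}. l j) / card ({1..K}-{i}) \<le> l j"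
    using exists_ge_average[OF _ others_nonempty] by blast
  then have j: "j \<in> {1..K}" "j \<noteq> i" and avg: "(1 - l i) / (real K - 1) \<le> l j"
    using average_others[OF l] by auto
  have "0 \<le> D e2 (eta_tilde (l i))"
    using relent_nonneg[OF e2 eta_tilde_in_N] probvec_nonneg[OF l] probvec_le_1[OF l] by auto
  then have "0 \<le> (l j - (1 - l i) / (real K - 1)) * D e2 (eta_tilde (l i))"
    using avg by simp
  then show ?thesis using Dinner_le_profile_minus[OF l j] by linarith
qed

lemma Dinner_less_profile:
  assumes l: "l \<in> probvec K" and li: "0 < l i"
    and j: "j \<in> {1..K}" "j \<noteq> i" and not_avg: "l j \<noteq> (1 - l i) / (real K - 1)"
  shows "Dinner N A kappa K i e1 e2 l < profile (l i)"
proof -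
  have "j \<in> {1..K} - {i}" and "l j \<noteq> (\<Sum>j\<in>{1..K}-{i}. l j) / card ({1..K}-{i})"
    using j not_avg average_others[OF l] by auto
  then obtain j' where "j' \<in> {1..K} - {i}" and "(\<Sum>j\<in>{1..K}-{i}. l j) / card ({1..K}-{i}) < l j'"
    using exists_gt_average[of "{1..K}-{i}"] by blast
  then have j': "j' \<in> {1..K}" "j' \<noteq> i" and avg: "(1 - l i) / (real K - 1) < l j'"
    using average_others[OF l] by auto
  have "l i \<le> 1" using probvec_le_1[OF l] .
  then have "0 < D e2 (eta_tilde (l i))"
    unfolding eta_tilde_def using profile_weights li
    by (intro relent_centroid_pos[OF e1 e2 neq]) auto
  then have "0 < (l j' - (1 - l i) / (real K - 1)) * D e2 (eta_tilde (l i))"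
    using avg by simp
  then show ?thesis using Dinner_le_profile_minus[OF l j'] by linarith
qed

lemma Dinner_uniform_off:
  assumes t: "t \<in> {0..1}"
  shows "Dinner N A kappa K i e1 e2 (uniform_off K i t) = profile t"
proof (rule order.antisym)
  note l = uniform_off_in_probvec[OF t]
  have ui: "uniform_off K i t i = t" by (simp add: uniform_off_def)
  show "Dinner N A kappa K i e1 e2 (uniform_off K i t) \<le> profile t"
    using Dinner_le_profile[OF l] unfolding ui .
  obtain j0 where j0: "j0 \<in> {1..K}" "j0 \<noteq> i" using others_nonempty by blast
  show "profile t \<le> Dinner N A kappa K i e1 e2 (uniform_off K i t)"
  proof (rule Dinner_ge[OF j0 e1])
    fix j x y assume j: "j \<in> {1..K}" "j \<noteq> i" and x: "x \<in> N" and y: "y \<in> N"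
    have uj: "uniform_off K i t j = (1 - t) / (real K - 1)" using j by (simp add: uniform_off_def)
    have "profile t \<le> t * D e1 y + (1 - t) * off_weight * D e2 y"
      unfolding profile_def using centroid_div_le[OF e1 e2 y profile_weights(1,2)[OF t]] by simp
    also have "\<dots> \<le> t * D e1 y + (1 - t) / (real K - 1) * D e2 x + (1 - t) * off_weight * D e2 y"
      using t K3 relent_nonneg[OF e2 x] by simp
    finally show "profile t \<le> uniform_off K i t i * D e1 y + uniform_off K i t j * D e2 x
        + (1 - uniform_off K i t i - uniform_off K i t j) * D e2 y"
      unfolding ui uj off_weight_eq by (simp add: algebra_simps)
  qed
qed

lemma profile_0: "profile 0 = 0"
  unfolding profile_def using centroid_div_left_0[OF e2] off_weight_pos by simp

lemma profile_pos: "t \<in> {0<..<1} \<Longrightarrow> 0 < profile t"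
  unfolding profile_def using off_weight_pos by (intro centroid_div_pos[OF e1 e2 neq]) auto

lemma continuous_on_profile: "continuous_on {0..1} profile"
  unfolding profile_def[abs_def]
  by (intro continuous_on_centroid_div[OF e1 e2] continuous_intros) (use profile_weights in auto)

lemma profile_attains_max: "\<exists>t\<in>{0..1}. \<forall>s\<in>{0..1}. profile s \<le> profile t"
  using continuous_attains_sup[OF compact_Icc _ continuous_on_profile] by auto

lemma Dstar_eq_profile_max:
  assumes t: "t \<in> {0..1}" and max: "\<forall>s\<in>{0..1}. profile s \<le> profile t"
  shows "Dstar N A kappa K i e1 e2 = profile t"
  unfolding Dstar_def
proof (rule cSup_eq_maximum)
  show "profile t \<in> Dinner N A kappa K i e1 e2 ` probvec K"
    using Dinner_uniform_off[OF t] uniform_off_in_probvec[OF t] by force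
  fix x assume "x \<in> Dinner N A kappa K i e1 e2 ` probvec K"
  then obtain l where l: "l \<in> probvec K" and x: "x = Dinner N A kappa K i e1 e2 l" by auto
  have "l i \<in> {0..1}" using probvec_nonneg[OF l] probvec_le_1[OF l] by auto
  then have "profile (l i) \<le> profile t" using max by blast
  then show "x \<le> profile t" using Dinner_le_profile[OF l] x by simp
qed

lemma Dstar_maximiser_uniform:
  assumes l: "l \<in> probvec K" and opt: "Dinner N A kappa K i e1 e2 l = Dstar N A kappa K i e1 e2"
    and j: "j \<in> {1..K}" "j \<noteq> i"
  shows "l j = (1 - l i) / (real K - 1)"
proof (rule ccontr)
  assume not_avg: "l j \<noteq> (1 - l i) / (real K - 1)"
  obtain t where t: "t \<in> {0..1}" and max: "\<forall>s\<in>{0..1}. profile s \<le> profile t"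
    using profile_attains_max by blast
  have li: "l i \<in> {0..1}" using probvec_nonneg[OF l] probvec_le_1[OF l] by auto
  have "Dinner N A kappa K i e1 e2 l < profile t"
  proof (cases "l i = 0")
    case True
    have "0 < profile (1/2)" by (rule profile_pos) simp
    also have "\<dots> \<le> profile t" using max by simp
    finally show ?thesis using Dinner_le_profile[OF l] True profile_0 by simp
  next
    case False
    then have "Dinner N A kappa K i e1 e2 l < profile (l i)"
      using Dinner_less_profile[OF l _ j not_avg] li by simp
    also have "profile (l i) \<le> profile t" using max li by blast
    finally show ?thesis .
  qed
  then show False using opt Dstar_eq_profile_max[OF t max] by simp
qed

end

theorem proposition2:
  fixes N :: "(real^'d) set"
    and A :: "real^'d \<Rightarrow> real"
    and kappa :: "real^'d \<Rightarrow> real^'d"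
    and etamap :: "real^'d \<Rightarrow> real^'d"
    and K i :: nat
    and e1 e2 :: "real^'d"
  assumes N_open: "open N" and N_convex: "convex N"
    and A_convex: "convex_on N A"
    and A_grad: "\<And>e. e \<in> N \<Longrightarrow> (A has_derivative (\<lambda>h. kappa e \<bullet> h)) (at e)"
    and A_C2: "\<exists>DA. (\<forall>e\<in>N. (kappa has_derivative blinfun_apply (DA e)) (at e)) \<and> continuous_on N DA"
    and M_open: "open (kappa ` N)" and M_convex: "convex (kappa ` N)"
    and F_finite: "\<And>k. k \<in> kappa ` N \<Longrightarrow> bdd_above ((\<lambda>e. e \<bullet> k - A e) ` N)"
    and F_grad: "\<And>k. k \<in> kappa ` N \<Longrightarrow> (conj N A has_derivative (\<lambda>h. etamap k \<bullet> h)) (at k)"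
    and F_C2: "\<exists>DF. (\<forall>k\<in>kappa ` N. (etamap has_derivative blinfun_apply (DF k)) (at k))
                   \<and> continuous_on (kappa ` N) DF"
    and K3: "K \<ge> 3" and i: "i \<in> {1..K}"
    and e1: "e1 \<in> N" and e2: "e2 \<in> N" and neq: "e1 \<noteq> e2"
  defines "c \<equiv> (real K - 2) / (real K - 1)"
  defines "g \<equiv> (\<lambda>t::real.
      let kt = (1 / (t + (1 - t) * c)) *\<^sub>R (t *\<^sub>R kappa e1 + ((1 - t) * c) *\<^sub>R kappa e2);
          et = etamap kt
      in t * relent A kappa e1 et + (1 - t) * c * relent A kappa e2 et)"
  shows "Dstar N A kappa K i e1 e2 = Sup (g ` {0..1})
     \<and> (\<exists>t\<in>{0..1}. \<forall>s\<in>{0..1}. g s \<le> g t)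
     \<and> (\<exists>l\<in>probvec K. Dinner N A kappa K i e1 e2 l = Dstar N A kappa K i e1 e2)
     \<and> (\<forall>l\<in>probvec K. Dinner N A kappa K i e1 e2 l = Dstar N A kappa K i e1 e2 \<longrightarrow>
          (\<forall>j\<in>{1..K}. j \<noteq> i \<longrightarrow> l j = (1 - l i) / (real K - 1)))"
proof -
  obtain DF where "\<forall>k\<in>kappa ` N. (etamap has_derivative blinfun_apply (DF k)) (at k)"
    using F_C2 by blast
  then have "continuous_on (kappa ` N) etamap"
    by (intro continuous_at_imp_continuous_on) (auto intro: has_derivative_continuous)
  then interpret dstar_config N A kappa etamap K i e1 e2
    using N_open A_convex A_grad M_open M_convex F_finite F_grad K3 i e1 e2 neq
    by unfold_locales auto
  have g: "g = profile"
    unfolding g_def c_def profile_def centroid_div_def centroid_def off_weight_def Let_def ..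
  obtain t where t: "t \<in> {0..1}" and max: "\<forall>s\<in>{0..1}. profile s \<le> profile t"
    using profile_attains_max by blast
  have Dstar: "Dstar N A kappa K i e1 e2 = profile t"
    by (rule Dstar_eq_profile_max[OF t max])
  have "Sup (profile ` {0..1}) = profile t"
    by (rule cSup_eq_maximum) (use t max in auto)
  moreover note uniform_off_in_probvec[OF t]
  moreover have "Dinner N A kappa K i e1 e2 (uniform_off K i t) = Dstar N A kappa K i e1 e2"
    using Dinner_uniform_off[OF t] Dstar by simp
  ultimately show ?thesis
    using Dstar Dstar_maximiser_uniform t max unfolding g by auto
qed

end
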